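(* Let $\mathcal H$ be a semi-inner product space of holomorphic functions on $\mathbb D$ with semi-norm $\|\cdot\|$, such that $zf\in\mathcal H$ whenever $f\in\mathcal H$, and $\|zf\|\ge\|f\|$ for all $f\in\mathcal H$. Then for $\lambda\in\mathbb T$ and $0\le r<1$, $$\|(z-\lambda)f\|\le\frac{2}{1+r}\|(z-r\lambda)f\|,\quad f\in\mathcal H.$$
   Context: $\mathbb D$ is the open unit disc and $\mathbb T$ the unit circle. *)

theory Defs
  imports "HOL-Analysis.Analysis"
begin

definition sip_space ::
  "(complex \<Rightarrow> complex) set \<Rightarrow> ((complex \<Rightarrow> complex) \<Rightarrow> (complex \<Rightarrow> complex) \<Rightarrow> complex) \<Rightarrow> bool"
where
  "sip_space H ip \<longleftrightarrow>
     (\<forall>f\<in>H. f holomorphic_on ball 0 1) \<and>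
     (\<lambda>z. 0) \<in> H \<and>
     (\<forall>f\<in>H. \<forall>g\<in>H. (\<lambda>z. f z + g z) \<in> H) \<and>
     (\<forall>c. \<forall>f\<in>H. (\<lambda>z. c * f z) \<in> H) \<and>
     (\<forall>f\<in>H. \<forall>g\<in>H. \<forall>h\<in>H. ip (\<lambda>z. f z + g z) h = ip f h + ip g h) \<and>
     (\<forall>c. \<forall>f\<in>H. \<forall>g\<in>H. ip (\<lambda>z. c * f z) g = c * ip f g) \<and>
     (\<forall>f\<in>H. \<forall>g\<in>H. ip g f = cnj (ip f g)) \<and>
     (\<forall>f\<in>H. Re (ip f f) \<ge> 0)"

definition sip_norm :: "((complex \<Rightarrow> complex) \<Rightarrow> (complex \<Rightarrow> complex) \<Rightarrow> complex) \<Rightarrow> (complex \<Rightarrow> complex) \<Rightarrow> real"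
where "sip_norm ip f = sqrt (Re (ip f f))"

end

theory Submission
  imports Defs
begin

text \<open>Put \<open>g = z f\<close>, \<open>A = \<parallel>g\<parallel>\<^sup>2\<close>, \<open>B = \<parallel>f\<parallel>\<^sup>2\<close> and \<open>t = Re (cnj \<lambda> \<langle>g, f\<rangle>)\<close>. Then
  \<open>\<parallel>(z - \<lambda>) f\<parallel>\<^sup>2 = A - 2 t + B\<close>, \<open>\<parallel>(z - r \<lambda>) f\<parallel>\<^sup>2 = A - 2 r t + r\<^sup>2 B\<close> and
  \<open>4 (A - 2 r t + r\<^sup>2 B) - (1 + r)\<^sup>2 (A - 2 t + B) = (1 - r) ((1 - r) (A + 2 t + B) + 2 (1 + r) (A - B))\<close>,
  which is nonnegative since \<open>A + 2 t + B = \<parallel>(z + \<lambda>) f\<parallel>\<^sup>2\<close> and \<open>A \<ge> B\<close>.\<close>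

lemma sip_space_add_mem:
  "sip_space H ip \<Longrightarrow> f \<in> H \<Longrightarrow> g \<in> H \<Longrightarrow> (\<lambda>z. f z + g z) \<in> H"
  unfolding sip_space_def by blast

lemma sip_space_scale_mem:
  "sip_space H ip \<Longrightarrow> f \<in> H \<Longrightarrow> (\<lambda>z. c * f z) \<in> H"
  unfolding sip_space_def by blast

lemma sip_space_ip_add_left:
  "sip_space H ip \<Longrightarrow> f \<in> H \<Longrightarrow> g \<in> H \<Longrightarrow> h \<in> H \<Longrightarrow>
    ip (\<lambda>z. f z + g z) h = ip f h + ip g h"
  unfolding sip_space_def by blast

lemma sip_space_ip_scale_left:
  "sip_space H ip \<Longrightarrow> f \<in> H \<Longrightarrow> g \<in> H \<Longrightarrow> ip (\<lambda>z. c * f z) g = c * ip f g"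
  unfolding sip_space_def by blast

lemma sip_space_ip_commute:
  "sip_space H ip \<Longrightarrow> f \<in> H \<Longrightarrow> g \<in> H \<Longrightarrow> ip g f = cnj (ip f g)"
  unfolding sip_space_def by blast

lemma sip_space_Re_ip_self_nonneg:
  "sip_space H ip \<Longrightarrow> f \<in> H \<Longrightarrow> 0 \<le> Re (ip f f)"
  unfolding sip_space_def by blast

lemma sip_space_ip_add_right:
  assumes S: "sip_space H ip" and f: "f \<in> H" and g: "g \<in> H" and h: "h \<in> H"
  shows "ip h (\<lambda>z. f z + g z) = ip h f + ip h g"
proof -
  have "ip h (\<lambda>z. f z + g z) = cnj (ip (\<lambda>z. f z + g z) h)"
    using S sip_space_add_mem[OF S f g] h by (rule sip_space_ip_commute)
  also have "\<dots> = cnj (ip f h) + cnj (ip g h)"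
    using S f g h by (simp add: sip_space_ip_add_left)
  also have "\<dots> = ip h f + ip h g"
    using sip_space_ip_commute[OF S f h] sip_space_ip_commute[OF S g h] by simp
  finally show ?thesis .
qed

lemma sip_space_ip_scale_right:
  assumes S: "sip_space H ip" and f: "f \<in> H" and h: "h \<in> H"
  shows "ip h (\<lambda>z. c * f z) = cnj c * ip h f"
proof -
  have "ip h (\<lambda>z. c * f z) = cnj (ip (\<lambda>z. c * f z) h)"
    using S sip_space_scale_mem[OF S f] h by (rule sip_space_ip_commute)
  also have "\<dots> = cnj c * cnj (ip f h)"
    using S f h by (simp add: sip_space_ip_scale_left)
  also have "\<dots> = cnj c * ip h f"
    using sip_space_ip_commute[OF S f h] by simp
  finally show ?thesis .
qed

lemma sip_space_Re_ip_add_scale_self: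
  assumes S: "sip_space H ip" and f: "f \<in> H" and g: "g \<in> H"
  shows "Re (ip (\<lambda>z. g z + c * f z) (\<lambda>z. g z + c * f z))
         = Re (ip g g) + 2 * Re (cnj c * ip g f) + (cmod c)\<^sup>2 * Re (ip f f)"
proof -
  have cf: "(\<lambda>z. c * f z) \<in> H"
    using S f by (rule sip_space_scale_mem)
  have "ip (\<lambda>z. g z + c * f z) (\<lambda>z. g z + c * f z)
      = ip g (\<lambda>z. g z + c * f z) + c * ip f (\<lambda>z. g z + c * f z)"
    using sip_space_ip_add_left[OF S g cf] sip_space_ip_scale_left[OF S f]
      sip_space_add_mem[OF S g cf] by simp
  also have "\<dots> = ip g g + cnj c * ip g f + c * ip f g + c * cnj c * ip f f"
    using sip_space_ip_add_right[OF S g cf] sip_space_ip_scale_right[OF S f] f g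
    by (simp add: algebra_simps)
  also have "ip f g = cnj (ip g f)"
    using S g f by (rule sip_space_ip_commute)
  finally show ?thesis
    by (simp add: cmod_power2 algebra_simps) (simp add: power2_eq_square)
qed

lemma sip_norm_le_mult_if_Re_ip_le:
  assumes "0 \<le> c" and "Re (ip f f) \<le> c\<^sup>2 * Re (ip g g)"
  shows "sip_norm ip f \<le> c * sip_norm ip g"
proof -
  have "sip_norm ip f \<le> sqrt (c\<^sup>2 * Re (ip g g))"
    unfolding sip_norm_def using assms(2) by (rule real_sqrt_le_mono)
  also have "\<dots> = c * sip_norm ip g"
    using assms(1) by (simp add: sip_norm_def real_sqrt_mult)
  finally show ?thesis .
qed

lemma quadratic_ratio_bound:
  fixes A B t r :: real
  assumes "B \<le> A" and "0 \<le> A + 2 * t + B" and "0 \<le> r" and "r < 1"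
  shows "(1 + r)\<^sup>2 * (A - 2 * t + B) \<le> 4 * (A - 2 * r * t + r\<^sup>2 * B)"
proof -
  have "0 \<le> (1 - r) * ((1 - r) * (A + 2 * t + B) + 2 * (1 + r) * (A - B))"
    using assms by simp
  also have "\<dots> = 4 * (A - 2 * r * t + r\<^sup>2 * B) - (1 + r)\<^sup>2 * (A - 2 * t + B)"
    by (simp add: algebra_simps power2_eq_square)
  finally show ?thesis
    by simp
qed

lemma sip_norm_diff_le:
  assumes S: "sip_space H ip" and f: "f \<in> H" and g: "g \<in> H"
    and fg: "sip_norm ip f \<le> sip_norm ip g"
    and lam: "cmod lam = 1" and r: "0 \<le> r" "r < 1"
  shows "sip_norm ip (\<lambda>z. g z - lam * f z)
           \<le> 2 / (1 + r) * sip_norm ip (\<lambda>z. g z - of_real r * lam * f z)"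
proof -
  define A where "A = Re (ip g g)"
  define B where "B = Re (ip f f)"
  define t where "t = Re (cnj lam * ip g f)"
  have expand: "Re (ip (\<lambda>z. g z + c * f z) (\<lambda>z. g z + c * f z))
      = A + 2 * Re (cnj c * ip g f) + (cmod c)\<^sup>2 * B" for c
    unfolding A_def B_def using S f g by (rule sip_space_Re_ip_add_scale_self)
  have minus_lam: "Re (ip (\<lambda>z. g z - lam * f z) (\<lambda>z. g z - lam * f z)) = A - 2 * t + B"
    using expand[of "- lam"] lam by (simp add: t_def)
  have minus_r_lam: "Re (ip (\<lambda>z. g z - of_real r * lam * f z) (\<lambda>z. g z - of_real r * lam * f z))
      = A - 2 * r * t + r\<^sup>2 * B"
    using expand[of "- (of_real r * lam)"] lam r
    by (simp add: t_def norm_mult power_mult_distrib algebra_simps)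
  have "0 \<le> Re (ip (\<lambda>z. g z + lam * f z) (\<lambda>z. g z + lam * f z))"
    using S f g by (simp add: sip_space_Re_ip_self_nonneg sip_space_add_mem sip_space_scale_mem)
  then have plus_lam: "0 \<le> A + 2 * t + B"
    using expand[of lam] lam by (simp add: t_def)
  have "B \<le> A"
    using fg by (simp add: sip_norm_def A_def B_def)
  then have "(1 + r)\<^sup>2 * (A - 2 * t + B) \<le> 4 * (A - 2 * r * t + r\<^sup>2 * B)"
    using plus_lam r by (rule quadratic_ratio_bound)
  then have "A - 2 * t + B \<le> (2 / (1 + r))\<^sup>2 * (A - 2 * r * t + r\<^sup>2 * B)"
    using r by (simp add: power_divide field_simps)
  then show ?thesis
    using r by (intro sip_norm_le_mult_if_Re_ip_le) (simp_all add: minus_lam minus_r_lam)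
qed

theorem lemma2p5:
  fixes H :: "(complex \<Rightarrow> complex) set"
    and ip :: "(complex \<Rightarrow> complex) \<Rightarrow> (complex \<Rightarrow> complex) \<Rightarrow> complex"
    and lam :: complex and r :: real
  assumes "sip_space H ip"
    and "\<forall>f\<in>H. (\<lambda>z. z * f z) \<in> H"
    and "\<forall>f\<in>H. sip_norm ip (\<lambda>z. z * f z) \<ge> sip_norm ip f"
    and "cmod lam = 1" and "0 \<le> r" and "r < 1"
    and "f \<in> H"
  shows "sip_norm ip (\<lambda>z. (z - lam) * f z)
           \<le> 2 / (1 + r) * sip_norm ip (\<lambda>z. (z - of_real r * lam) * f z)"
proof -
  have "sip_norm ip (\<lambda>z. z * f z - lam * f z)
      \<le> 2 / (1 + r) * sip_norm ip (\<lambda>z. z * f z - of_real r * lam * f z)"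
    using assms by (intro sip_norm_diff_le[of H]) auto
  then show ?thesis
    by (simp add: left_diff_distrib)
qed

end
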